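(* Let $y_0\in E$ and suppose: (A1) $\eta>0$ on $[y_0,\infty)$ and $\eta\in C^2([y_0,\infty))$; (A2) $b^2/\eta$, $\tilde a/\eta$ and $\eta'/\eta$ are bounded on $[y_0,\infty)$; (A3) $\Psi\eta(y)\to1$ as $y\to\infty$. Let $u$ be a solution of $$0=\tfrac12b^2u''+\tilde au'+\eta u-u^2-d\frac{(u')^2}{u}$$ on $[y_0,\infty)$ with $C_1\eta\le u\le C_2\eta$ there, for some constants $0<C_1<C_2$. Then $u(y)/\eta(y)\to1$ as $y\to\infty$.
   Context: $E=(E_-,\infty)$ with $E_-\in\{-\infty\}\cup\mathbb R$. $r,\lambda,\sigma,a,b,\rho,\delta:E\to\mathbb R$ are locally Lipschitz with $\sigma>0$, $b(y)\neq0$, $\rho(y)\in[-1,1]$; $R\in(0,\infty)\setminus\{1\}$. Define $\eta=\frac1R\big(\delta-(1-R)(r+\frac{\lambda^2}{2R})\big)$, $\tilde a=a+\frac{1-R}{R}\rho\lambda b$, $d=\frac12b^2((1-\rho^2)R+\rho^2+1)$, and for positive $g\in C^2$, $\Psi g=1+\frac{\frac12b^2g''+\tilde ag'}{g^2}-d\frac{(g')^2}{g^3}$. A solution on $[y_0,\infty)$ is a positive $C^2$ function satisfying the equation there. *)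

theory Defs
  imports "HOL-Analysis.Analysis"
begin

text \<open>Domain E = (E_-, infinity) with E_- in {-infinity} union reals, encoded by an extended real.\<close>
definition dom_E :: "ereal \<Rightarrow> real set" where
  "dom_E Em = {y. Em < ereal y}"

definition loc_lipschitz_on :: "real set \<Rightarrow> (real \<Rightarrow> real) \<Rightarrow> bool" where
  "loc_lipschitz_on S f \<longleftrightarrow>
     (\<forall>x\<in>S. \<exists>e>0. \<exists>L. L-lipschitz_on (cball x e \<inter> S) f)"

definition eta_fun :: "real \<Rightarrow> (real \<Rightarrow> real) \<Rightarrow> (real \<Rightarrow> real) \<Rightarrow> (real \<Rightarrow> real) \<Rightarrow> real \<Rightarrow> real" where
  "eta_fun R r lam delta y = (delta y - (1 - R) * (r y + (lam y)\<^sup>2 / (2 * R))) / R"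

definition atil_fun :: "real \<Rightarrow> (real \<Rightarrow> real) \<Rightarrow> (real \<Rightarrow> real) \<Rightarrow> (real \<Rightarrow> real) \<Rightarrow> (real \<Rightarrow> real) \<Rightarrow> real \<Rightarrow> real" where
  "atil_fun R a rho lam b y = a y + (1 - R) / R * rho y * lam y * b y"

definition d_fun :: "real \<Rightarrow> (real \<Rightarrow> real) \<Rightarrow> (real \<Rightarrow> real) \<Rightarrow> real \<Rightarrow> real" where
  "d_fun R b rho y = 1/2 * (b y)\<^sup>2 * ((1 - (rho y)\<^sup>2) * R + (rho y)\<^sup>2 + 1)"

definition C2_with :: "real set \<Rightarrow> (real \<Rightarrow> real) \<Rightarrow> (real \<Rightarrow> real) \<Rightarrow> (real \<Rightarrow> real) \<Rightarrow> bool" where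
  "C2_with S g g1 g2 \<longleftrightarrow>
     (\<forall>y\<in>S. (g has_real_derivative g1 y) (at y within S) \<and>
             (g1 has_real_derivative g2 y) (at y within S)) \<and> continuous_on S g2"

definition Psi :: "(real \<Rightarrow> real) \<Rightarrow> (real \<Rightarrow> real) \<Rightarrow> (real \<Rightarrow> real) \<Rightarrow> (real \<Rightarrow> real) \<Rightarrow> (real \<Rightarrow> real) \<Rightarrow> (real \<Rightarrow> real) \<Rightarrow> real \<Rightarrow> real" where
  "Psi b at2 d g g1 g2 y =
     1 + (1/2 * (b y)\<^sup>2 * g2 y + at2 y * g1 y) / (g y)\<^sup>2 - d y * (g1 y)\<^sup>2 / (g y) ^ 3"

end

theory Submission
  imports Defs
begin

text \<open>
  For \<open>w = u/\<eta>\<close> the equation becomes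
  \<open>b\<^sup>2/(2\<eta>) w'' = w (w - \<Psi>\<eta>) - B w' + (d/\<eta>) w'\<^sup>2/w\<close>, where \<open>B\<close> is built from
  \<open>b\<^sup>2/\<eta>\<close>, \<open>\<eta>'/\<eta>\<close>, \<open>atil/\<eta>\<close> and \<open>d/\<eta>\<close>, so all coefficients are bounded by (A2).
  Since \<open>\<Psi>\<eta> \<rightarrow> 1\<close>, at points where \<open>w \<ge> 1 + \<epsilon>\<close> and \<open>w'\<close> is small the right-hand side is
  at least of order \<open>\<epsilon>\<close>, so \<open>w\<close> is uniformly convex there; symmetrically \<open>w\<close> is uniformly
  concave where \<open>w \<le> 1 - \<epsilon>\<close> and \<open>w'\<close> is small. A bounded function with this property on a
  half-line must eventually stay below \<open>1 + \<epsilon>\<close>: otherwise a barrier argument on \<open>w'\<close>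
  shows that \<open>w'\<close> eventually exceeds a positive constant, contradicting boundedness.
\<close>

lemma first_crossing_point:
  fixes \<phi> :: "real \<Rightarrow> real"
  assumes "a \<le> s" and cont: "continuous_on {a..s} \<phi>" and "\<phi> a \<le> 0" "0 < \<phi> s"
  obtains p where "a \<le> p" "p < s" "\<phi> p = 0" "\<forall>y\<in>{a..p}. \<phi> y \<le> 0"
    "\<forall>d>0. \<exists>y. p < y \<and> y < p + d \<and> 0 < \<phi> y"
proof -
  define S where "S = {y\<in>{a..s}. 0 < \<phi> y}"
  define p where "p = Inf S"
  have "s \<in> S" using assms by (simp add: S_def)
  then have ne: "S \<noteq> {}" by blast
  have bdd: "bdd_below S" by (auto simp: S_def bdd_below_def)
  have lower: "p \<le> y" if "y \<in> S" for y using bdd that by (simp add: p_def cInf_lower)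
  have ap: "a \<le> p" unfolding p_def using ne by (intro cInf_greatest) (auto simp: S_def)
  have ps: "p \<le> s" using lower \<open>s \<in> S\<close> by blast
  have nonpos: "\<forall>y\<in>{a..p}. \<phi> y \<le> 0"
  proof (cases "a = p")
    case True
    then show ?thesis using assms by simp
  next
    case False
    have "{a..<p} \<subseteq> {y\<in>{a..s}. \<phi> y \<le> 0}"
      using lower ps by (force simp: S_def not_less)
    moreover have "closed {y\<in>{a..s}. \<phi> y \<le> 0}"
      by (intro continuous_on_closed_Collect_le cont continuous_on_const closed_atLeastAtMost)
    ultimately have "closure {a..<p} \<subseteq> {y\<in>{a..s}. \<phi> y \<le> 0}" by (rule closure_minimal)
    then show ?thesis using False ap by auto
  qed
  have "S \<subseteq> {y\<in>{a..s}. 0 \<le> \<phi> y}" by (auto simp: S_def)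
  moreover have "closed {y\<in>{a..s}. 0 \<le> \<phi> y}"
    by (intro continuous_on_closed_Collect_le cont continuous_on_const closed_atLeastAtMost)
  ultimately have "closure S \<subseteq> {y\<in>{a..s}. 0 \<le> \<phi> y}" by (rule closure_minimal)
  with closure_contains_Inf[OF ne bdd] have "0 \<le> \<phi> p" by (auto simp: p_def)
  moreover have "\<phi> p \<le> 0" using nonpos ap by simp
  ultimately have p0: "\<phi> p = 0" by linarith
  have "\<exists>y. p < y \<and> y < p + d \<and> 0 < \<phi> y" if "d > 0" for d
  proof -
    obtain y where "y \<in> S" "y < p + d"
      using cInf_lessD[OF ne, of "p + d"] \<open>d > 0\<close> by (auto simp: p_def)
    moreover have "y \<noteq> p" using \<open>y \<in> S\<close> p0 by (auto simp: S_def)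
    ultimately have "p < y" "0 < \<phi> y" using lower[of y] by (auto simp: S_def)
    with \<open>y < p + d\<close> show ?thesis by blast
  qed
  moreover have "p \<noteq> s" using p0 assms by auto
  ultimately show ?thesis using that ap ps nonpos p0 by simp
qed

lemma ramp_barrier:
  fixes f f' :: "real \<Rightarrow> real"
  assumes "0 < \<delta>"
    and deriv: "\<forall>x\<ge>x0. (f has_real_derivative f' x) (at x)"
    and start: "c \<le> f x0"
    and touch: "\<And>x. x0 \<le> x \<Longrightarrow> \<forall>y\<in>{x0..x}. min \<kappa> (c + \<delta>/2 * (y - x0)) \<le> f y
                  \<Longrightarrow> f x = min \<kappa> (c + \<delta>/2 * (x - x0)) \<Longrightarrow> \<delta> \<le> f' x"
  shows "\<forall>x\<ge>x0. min \<kappa> (c + \<delta>/2 * (x - x0)) \<le> f x"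
proof (rule ccontr)
  define ramp where "ramp x = min \<kappa> (c + \<delta>/2 * (x - x0))" for x
  assume "\<not> ?thesis"
  then obtain s where s: "x0 \<le> s" "f s < ramp s" by (auto simp: ramp_def not_le)
  have "isCont f y" if "x0 \<le> y" for y
    using deriv that DERIV_isCont by blast
  then have cont: "continuous_on {x0..s} (\<lambda>y. ramp y - f y)"
    by (auto simp: ramp_def intro!: continuous_at_imp_continuous_on continuous_intros)
  have "ramp x0 - f x0 \<le> 0" "0 < ramp s - f s" using start s(2) by (simp_all add: ramp_def)
  then obtain p where p: "x0 \<le> p" "p < s" "ramp p - f p = 0"
      "\<forall>y\<in>{x0..p}. ramp y - f y \<le> 0" "\<forall>d>0. \<exists>y. p < y \<and> y < p + d \<and> 0 < ramp y - f y"
    by (rule first_crossing_point[OF s(1) cont])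
  have "((\<lambda>y. f y - \<delta>/2 * y) has_real_derivative f' p - \<delta>/2) (at p)"
    using deriv p(1) by (auto intro!: derivative_eq_intros)
  moreover have "\<delta> \<le> f' p" using touch p(1,3,4) by (simp add: ramp_def)
  ultimately obtain d where "d > 0"
    and inc: "\<forall>h>0. h < d \<longrightarrow> f p - \<delta>/2 * p < f (p + h) - \<delta>/2 * (p + h)"
    using DERIV_pos_inc_right[where f="\<lambda>y. f y - \<delta>/2 * y" and x=p and l="f' p - \<delta>/2"] \<open>0 < \<delta>\<close> by auto
  obtain y where y: "p < y" "y < p + d" "f y < ramp y"
    using p(5) \<open>d > 0\<close> by auto
  have "f p - \<delta>/2 * p < f y - \<delta>/2 * y"
    using inc[rule_format, of "y - p"] y by simp
  \<comment> \<open>the ramp grows with slope at most \<open>\<delta>/2\<close>, while \<open>f\<close> grows faster right after \<open>p\<close>\<close>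
  have "\<delta> * p < \<delta> * y" using \<open>0 < \<delta>\<close> y(1) by simp
  then have "ramp y - \<delta>/2 * y \<le> ramp p - \<delta>/2 * p"
    by (auto simp: ramp_def min_def field_simps)
  then show False using y p(3) \<open>f p - \<delta>/2 * p < f y - \<delta>/2 * y\<close> by linarith
qed

lemma bounded_imp_ex_slope_less:
  fixes v v' :: "real \<Rightarrow> real"
  assumes bounds: "\<forall>x\<ge>T. lo \<le> v x \<and> v x \<le> hi"
    and deriv: "\<forall>x\<ge>T. (v has_real_derivative v' x) (at x)" and "0 < \<kappa>"
  shows "\<exists>x\<ge>T. v' x < \<kappa>"
proof (rule ccontr)
  assume "\<not> ?thesis"
  then have steep: "\<forall>x\<ge>T. \<kappa> \<le> v' x" by (simp add: not_less)
  define L where "L = (hi - lo) / \<kappa> + 1"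
  have "lo \<le> hi" using bounds by force
  then have L: "0 < L" "L * \<kappa> = hi - lo + \<kappa>" using \<open>0 < \<kappa>\<close> by (auto simp: L_def field_simps)
  obtain z where z: "T < z" "v (T + L) - v T = L * v' z"
    using MVT2[of T "T + L" v v'] L deriv by auto
  have "L * \<kappa> \<le> L * v' z" using steep z(1) L(1) by simp
  moreover have "lo \<le> v T" "v (T + L) \<le> hi" using bounds L by auto
  ultimately show False using z(2) L \<open>0 < \<kappa>\<close> by linarith
qed

lemma stays_below_if_decreasing_above:
  fixes v v' :: "real \<Rightarrow> real"
  assumes deriv: "\<forall>x\<ge>x0. (v has_real_derivative v' x) (at x)"
    and decreasing: "\<forall>x\<ge>x0. \<theta> \<le> v x \<longrightarrow> v' x < 0" and "v x0 < \<theta>"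
  shows "\<forall>x\<ge>x0. v x < \<theta>"
proof (intro allI impI, rule ccontr)
  fix x assume "x0 \<le> x" "\<not> v x < \<theta>"
  define S where "S = {y\<in>{x0..x}. \<theta> \<le> v y}"
  have "isCont v y" if "x0 \<le> y" for y using deriv that DERIV_isCont by blast
  then have "closed S" unfolding S_def
    by (intro continuous_on_closed_Collect_le continuous_at_imp_continuous_on continuous_on_const
        closed_atLeastAtMost) auto
  moreover have "x \<in> S" using \<open>x0 \<le> x\<close> \<open>\<not> v x < \<theta>\<close> by (simp add: S_def)
  moreover have "bdd_below S" by (auto simp: S_def bdd_below_def)
  ultimately have "Inf S \<in> S" and first: "\<And>y. y \<in> S \<Longrightarrow> Inf S \<le> y"
    using closed_contains_Inf cInf_lower by blast+
  define p where "p = Inf S"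
  have p: "x0 < p" "p \<le> x" "\<theta> \<le> v p"
    using \<open>Inf S \<in> S\<close> \<open>v x0 < \<theta>\<close> by (auto simp: S_def p_def order.order_iff_strict)
  \<comment> \<open>\<open>v\<close> decreases through \<open>p\<close>, so it is already above \<open>\<theta>\<close> a little before \<open>p\<close>\<close>
  obtain d where "0 < d" and dec: "\<forall>h>0. h < d \<longrightarrow> v p < v (p - h)"
    using DERIV_neg_dec_left[where f=v and x=p and l="v' p"] deriv decreasing p by auto
  define h where "h = min (d/2) ((p - x0)/2)"
  have "0 < h" "h < d" using \<open>0 < d\<close> p by (auto simp: h_def)
  moreover have "h \<le> (p - x0)/2" unfolding h_def by (rule min.cobounded2)
  ultimately have "x0 \<le> p - h" "p - h \<le> x" "\<theta> \<le> v (p - h)"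
    using dec p by auto
  then have "p \<le> p - h" using first[of "p - h"] by (simp add: S_def p_def)
  then show False using \<open>0 < h\<close> by simp
qed

locale convex_when_flat_above =
  fixes v v' v'' :: "real \<Rightarrow> real" and T lo hi \<theta> \<kappa> \<delta> :: real
  assumes \<kappa>_pos: "0 < \<kappa>" and \<delta>_pos: "0 < \<delta>"
    and bounds: "\<forall>x\<ge>T. lo \<le> v x \<and> v x \<le> hi"
    and deriv: "\<forall>x\<ge>T. (v has_real_derivative v' x) (at x)"
    and deriv2: "\<forall>x\<ge>T. (v' has_real_derivative v'' x) (at x)"
    and convex: "\<forall>x\<ge>T. \<theta> \<le> v x \<longrightarrow> \<bar>v' x\<bar> \<le> \<kappa> \<longrightarrow> \<delta> \<le> v'' x"
begin

lemma no_ramp_below_slope: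
  assumes "T \<le> t" and ramp: "\<forall>x\<ge>t. min \<kappa> (c + \<delta>/2 * (x - t)) \<le> v' x"
  shows False
proof -
  define t1 where "t1 = t + 2 * (\<kappa> - c) / \<delta>"
  have "\<kappa> \<le> v' x" if "max t t1 \<le> x" for x
  proof -
    have "\<delta> * (t1 - t) = 2 * (\<kappa> - c)" using \<delta>_pos by (simp add: t1_def)
    moreover have "\<delta> * (t1 - t) \<le> \<delta> * (x - t)" using that \<delta>_pos by simp
    ultimately have "\<kappa> \<le> c + \<delta>/2 * (x - t)" by simp
    then show ?thesis using ramp that by force
  qed
  moreover have "\<forall>x\<ge>max t t1. lo \<le> v x \<and> v x \<le> hi" "\<forall>x\<ge>max t t1. (v has_real_derivative v' x) (at x)"
    using bounds deriv \<open>T \<le> t\<close> by auto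
  ultimately show False using bounded_imp_ex_slope_less[of "max t t1" lo v hi v' \<kappa>] \<kappa>_pos by force
qed

lemma slope_neg_where_above:
  assumes "T \<le> t" "\<theta> \<le> v t"
  shows "v' t < 0"
proof (rule ccontr)
  assume "\<not> v' t < 0"
  have "\<forall>x\<ge>t. min \<kappa> (0 + \<delta>/2 * (x - t)) \<le> v' x"
  proof (rule ramp_barrier[OF \<delta>_pos])
    show "\<forall>x\<ge>t. (v' has_real_derivative v'' x) (at x)" using deriv2 \<open>T \<le> t\<close> by auto
    show "0 \<le> v' t" using \<open>\<not> v' t < 0\<close> by simp
    fix x assume x: "t \<le> x" and above: "\<forall>y\<in>{t..x}. min \<kappa> (0 + \<delta>/2 * (y - t)) \<le> v' y"
      and touch: "v' x = min \<kappa> (0 + \<delta>/2 * (x - t))"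
    have "v t \<le> v x"
    proof (rule DERIV_nonneg_imp_nondecreasing[OF x])
      fix z assume z: "t \<le> z" "z \<le> x"
      have "0 \<le> min \<kappa> (0 + \<delta>/2 * (z - t))" using \<kappa>_pos \<delta>_pos z by simp
      also have "\<dots> \<le> v' z" using above z by simp
      finally show "\<exists>y. (v has_real_derivative y) (at z) \<and> 0 \<le> y"
        using deriv z \<open>T \<le> t\<close> by (intro exI[of _ "v' z"]) simp
    qed
    moreover have "\<bar>v' x\<bar> \<le> \<kappa>" using touch \<kappa>_pos \<delta>_pos x by auto
    ultimately show "\<delta> \<le> v'' x" using convex assms x by force
  qed
  then show False using no_ramp_below_slope[OF \<open>T \<le> t\<close>] by blast
qed

lemma exists_below: "\<exists>x\<ge>T. v x < \<theta>"
proof (rule ccontr)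
  assume "\<not> ?thesis"
  then have above: "\<forall>x\<ge>T. \<theta> \<le> v x" by (simp add: not_less)
  have "\<forall>x\<ge>T. - hi \<le> - v x \<and> - v x \<le> - lo" "\<forall>x\<ge>T. ((\<lambda>x. - v x) has_real_derivative - v' x) (at x)"
    using bounds deriv by (auto intro: DERIV_minus)
  then obtain x0 where x0: "T \<le> x0" "- \<kappa> \<le> v' x0"
    using bounded_imp_ex_slope_less[of T "- hi" "\<lambda>x. - v x" "- lo" "\<lambda>x. - v' x" \<kappa>] \<kappa>_pos by force
  \<comment> \<open>starting from slope \<open>-\<kappa>\<close>, the barrier keeps \<open>\<bar>v'\<bar> \<le> \<kappa>\<close> while it rises, since \<open>v\<close> stays above \<open>\<theta>\<close>\<close>
  have "\<forall>x\<ge>x0. min \<kappa> (- \<kappa> + \<delta>/2 * (x - x0)) \<le> v' x"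
  proof (rule ramp_barrier[OF \<delta>_pos])
    show "\<forall>x\<ge>x0. (v' has_real_derivative v'' x) (at x)" using deriv2 x0 by auto
    fix x assume x: "x0 \<le> x" and touch: "v' x = min \<kappa> (- \<kappa> + \<delta>/2 * (x - x0))"
    have "0 \<le> \<delta> * (x - x0)" using \<delta>_pos x by simp
    then have "\<bar>v' x\<bar> \<le> \<kappa>" using touch \<kappa>_pos by (auto simp: min_def abs_if)
    then show "\<delta> \<le> v'' x" using convex above x0 x by force
  qed (use x0 in auto)
  then show False using no_ramp_below_slope[OF x0(1)] by blast
qed

lemma eventually_below: "\<forall>\<^sub>F x in at_top. v x < \<theta>"
proof -
  obtain x0 where "T \<le> x0" "v x0 < \<theta>" using exists_below by blast
  then have "\<forall>x\<ge>x0. v x < \<theta>"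
    using deriv slope_neg_where_above by (intro stays_below_if_decreasing_above[where v'=v']) auto
  then show ?thesis unfolding eventually_at_top_linorder by blast
qed

end

lemma eventually_below_if_convex_when_flat:
  fixes v v' v'' :: "real \<Rightarrow> real"
  assumes "0 < \<kappa>" "0 < \<delta>"
    and "\<forall>\<^sub>F x in at_top. lo \<le> v x \<and> v x \<le> hi \<and> (v has_real_derivative v' x) (at x)
           \<and> (v' has_real_derivative v'' x) (at x) \<and> (\<theta> \<le> v x \<longrightarrow> \<bar>v' x\<bar> \<le> \<kappa> \<longrightarrow> \<delta> \<le> v'' x)"
  shows "\<forall>\<^sub>F x in at_top. v x < \<theta>"
proof -
  obtain T where "\<forall>x\<ge>T. lo \<le> v x \<and> v x \<le> hi \<and> (v has_real_derivative v' x) (at x)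
      \<and> (v' has_real_derivative v'' x) (at x) \<and> (\<theta> \<le> v x \<longrightarrow> \<bar>v' x\<bar> \<le> \<kappa> \<longrightarrow> \<delta> \<le> v'' x)"
    using assms(3) unfolding eventually_at_top_linorder by blast
  then interpret convex_when_flat_above v v' v'' T lo hi \<theta> \<kappa> \<delta>
    using assms(1,2) by unfold_locales auto
  show ?thesis by (rule eventually_below)
qed

lemma curvature_above_equilibrium:
  fixes w w' w'' P B D Ps K M g :: real
  assumes ode: "P/2 * w'' = w * (w - Ps) - B * w' + D * w'^2 / w"
    and P: "0 < P" "P \<le> K" and "\<bar>B\<bar> \<le> M" "0 \<le> D"
    and "0 < g" "1 \<le> w" "Ps + g \<le> w" and w': "\<bar>w'\<bar> \<le> g / (2 * (M + 1))"
  shows "g / K \<le> w''"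
proof -
  have "1 * g \<le> w * (w - Ps)" using assms by (intro mult_mono) auto
  moreover have "\<bar>B * w'\<bar> \<le> M * (g / (2 * (M + 1)))"
    unfolding abs_mult using assms by (intro mult_mono) auto
  then have "B * w' \<le> M * (g / (2 * (M + 1)))" by (rule abs_le_D1)
  moreover have "M * (g / (2 * (M + 1))) \<le> g / 2"
    using assms by (simp add: field_simps)
  moreover have "0 \<le> D * w'^2 / w" using assms by simp
  ultimately have "g / 2 \<le> P/2 * w''" unfolding ode by linarith
  moreover from this have "0 < P/2 * w''" using \<open>0 < g\<close> by linarith
  then have "0 \<le> w''" using P by (simp add: zero_less_mult_iff)
  then have "P/2 * w'' \<le> K/2 * w''" using P by (intro mult_right_mono) auto
  ultimately have "g / 2 \<le> K/2 * w''" by linarith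
  then show ?thesis using P by (simp add: field_simps)
qed

lemma curvature_below_equilibrium:
  fixes w w' w'' P B D Ps K M N C g :: real
  assumes ode: "P/2 * w'' = w * (w - Ps) - B * w' + D * w'^2 / w"
    and P: "0 < P" "P \<le> K" and "\<bar>B\<bar> \<le> M" "0 \<le> D" "D \<le> N"
    and "0 < C" "C \<le> w" "0 < g" "w + g \<le> Ps" and w': "\<bar>w'\<bar> \<le> min 1 (C * g / (2 * (M + N/C + 1)))"
  shows "C * g / K \<le> - w''"
proof -
  define X where "X = M + N/C + 1"
  define \<kappa> where "\<kappa> = C * g / (2 * X)"
  have "0 \<le> M" "0 \<le> N" using assms by auto
  then have "0 < X" using \<open>0 < C\<close> by (simp add: X_def add_nonneg_pos)
  then have "0 < \<kappa>" "X * \<kappa> = C * g / 2" using assms by (simp_all add: \<kappa>_def)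
  have "C * g \<le> w * (Ps - w)" using assms by (intro mult_mono) auto
  then have "C * g \<le> - (w * (w - Ps))" by (simp add: algebra_simps)
  moreover have "\<bar>B * w'\<bar> \<le> M * \<kappa>"
    unfolding abs_mult using assms by (intro mult_mono) (auto simp: \<kappa>_def X_def)
  then have "- (B * w') \<le> M * \<kappa>" by (rule abs_le_D2)
  moreover have "D * w'^2 / w \<le> N * \<kappa> / C"
  proof -
    have "w'^2 = \<bar>w'\<bar> * \<bar>w'\<bar>" by (simp add: power2_eq_square)
    also have "\<dots> \<le> \<bar>w'\<bar> * 1" using w' by (intro mult_left_mono) auto
    also have "\<dots> \<le> \<kappa>" using w' by (simp add: \<kappa>_def X_def)
    finally have "D * w'^2 \<le> N * \<kappa>" using assms by (intro mult_mono) auto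
    then show ?thesis using assms \<open>0 < \<kappa>\<close> by (intro frac_le) auto
  qed
  moreover have "M * \<kappa> + N * \<kappa> / C \<le> C * g / 2"
    using \<open>X * \<kappa> = C * g / 2\<close> \<open>0 < \<kappa>\<close> by (simp add: X_def algebra_simps)
  ultimately have "C * g / 2 \<le> P/2 * - w''" unfolding minus_mult_right[symmetric] ode
    by linarith
  moreover from this have "0 < P/2 * - w''"
    using mult_pos_pos[OF \<open>0 < C\<close> \<open>0 < g\<close>] by linarith
  then have "0 \<le> - w''" using P by (simp add: zero_less_mult_iff mult_less_0_iff)
  then have "P/2 * - w'' \<le> K/2 * - w''" using P by (intro mult_right_mono) auto
  ultimately have "C * g / 2 \<le> K/2 * - w''" by linarith
  then show ?thesis using P by (simp add: field_simps)
qed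

text \<open>The equation for the ratio \<open>w = u/\<eta>\<close>, with \<open>P = b\<^sup>2/\<eta>\<close>, \<open>D = d/\<eta>\<close> and \<open>Ps = \<Psi>\<eta>\<close>.\<close>

locale ratio_equation =
  fixes w w' w'' P B D Ps :: "real \<Rightarrow> real" and C1 C2 K M N :: real
  assumes C1_pos: "0 < C1"
    and bounds: "\<forall>\<^sub>F y in at_top. C1 \<le> w y \<and> w y \<le> C2"
    and derivs: "\<forall>\<^sub>F y in at_top. (w has_real_derivative w' y) (at y) \<and> (w' has_real_derivative w'' y) (at y)"
    and coeffs: "\<forall>\<^sub>F y in at_top. 0 < P y \<and> P y \<le> K \<and> \<bar>B y\<bar> \<le> M \<and> 0 \<le> D y \<and> D y \<le> N"
    and ode: "\<forall>\<^sub>F y in at_top. P y / 2 * w'' y = w y * (w y - Ps y) - B y * w' y + D y * (w' y)^2 / w y"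
    and Ps_tendsto: "(Ps \<longlongrightarrow> 1) at_top"
begin

lemma coeff_bounds_nonneg: "0 < K" "0 \<le> M" "0 \<le> N"
  using eventually_happens'[OF _ coeffs] by force+

lemma eventually_less:
  assumes "1 < a"
  shows "\<forall>\<^sub>F y in at_top. w y < a"
proof -
  define g where "g = (a - 1) / 2"
  have "0 < g" using assms by (simp add: g_def)
  then have "\<forall>\<^sub>F y in at_top. Ps y < 1 + g" by (intro order_tendstoD(2)[OF Ps_tendsto]) simp
  with bounds derivs coeffs ode
  have "\<forall>\<^sub>F y in at_top. C1 \<le> w y \<and> w y \<le> C2 \<and> (w has_real_derivative w' y) (at y)
      \<and> (w' has_real_derivative w'' y) (at y) \<and> (a \<le> w y \<longrightarrow> \<bar>w' y\<bar> \<le> g / (2 * (M + 1)) \<longrightarrow> g / K \<le> w'' y)"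
  proof eventually_elim
    case (elim y)
    have "1 \<le> w y" "Ps y + g \<le> w y" if "a \<le> w y"
      using elim(5) that assms by (auto simp: g_def field_simps)
    then show ?case
      using elim curvature_above_equilibrium[of "P y" "w'' y" "w y" "Ps y" "B y" "w' y" "D y" K M g]
        \<open>0 < g\<close> by auto
  qed
  then show ?thesis
    by (rule eventually_below_if_convex_when_flat[rotated 2])
      (use \<open>0 < g\<close> coeff_bounds_nonneg in simp_all)
qed

lemma eventually_greater:
  assumes "a < 1"
  shows "\<forall>\<^sub>F y in at_top. a < w y"
proof -
  define g where "g = (1 - a) / 2"
  define \<kappa> where "\<kappa> = min 1 (C1 * g / (2 * (M + N/C1 + 1)))"
  have "0 < g" using assms by (simp add: g_def)
  then have "\<forall>\<^sub>F y in at_top. 1 - g < Ps y" by (intro order_tendstoD(1)[OF Ps_tendsto]) simp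
  with bounds derivs coeffs ode
  have "\<forall>\<^sub>F y in at_top. - C2 \<le> - w y \<and> - w y \<le> - C1 \<and> ((\<lambda>y. - w y) has_real_derivative - w' y) (at y)
      \<and> ((\<lambda>y. - w' y) has_real_derivative - w'' y) (at y)
      \<and> (- a \<le> - w y \<longrightarrow> \<bar>- w' y\<bar> \<le> \<kappa> \<longrightarrow> C1 * g / K \<le> - w'' y)"
  proof eventually_elim
    case (elim y)
    have "w y + g \<le> Ps y" if "w y \<le> a"
      using elim(5) that by (auto simp: g_def field_simps)
    then show ?case
      using elim curvature_below_equilibrium[of "P y" "w'' y" "w y" "Ps y" "B y" "w' y" "D y" K M N C1 g]
        C1_pos \<open>0 < g\<close> by (auto simp: \<kappa>_def intro: DERIV_minus)
  qed
  moreover have "0 < \<kappa>"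
    using C1_pos coeff_bounds_nonneg \<open>0 < g\<close> by (simp add: \<kappa>_def add_nonneg_pos)
  ultimately have "\<forall>\<^sub>F y in at_top. - w y < - a"
    by (rule eventually_below_if_convex_when_flat[rotated 2])
      (use \<open>0 < g\<close> C1_pos coeff_bounds_nonneg in simp_all)
  then show ?thesis by simp
qed

lemma tendsto_one: "(w \<longlongrightarrow> 1) at_top"
  by (rule order_tendstoI) (use eventually_greater eventually_less in auto)

end

lemma C2_with_has_derivatives_at:
  assumes "C2_with {y0..} g g' g''" "y0 < y"
  shows "(g has_real_derivative g' y) (at y)" "(g' has_real_derivative g'' y) (at y)"
proof -
  have "y \<in> interior {y0..}" using assms(2) by simp
  then have at: "at y within {y0..} = at y" by (rule at_within_interior)
  have "y \<in> {y0..}" using assms(2) by simp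
  with assms(1) have "(g has_real_derivative g' y) (at y within {y0..})"
    "(g' has_real_derivative g'' y) (at y within {y0..})"
    unfolding C2_with_def by blast+
  then show "(g has_real_derivative g' y) (at y)" "(g' has_real_derivative g'' y) (at y)"
    unfolding at .
qed

lemma quotient_has_derivatives:
  fixes u u' u'' e e' e'' :: "real \<Rightarrow> real"
  assumes u: "(u has_real_derivative u' y) (at y)" "(u' has_real_derivative u'' y) (at y)"
    and e: "(e has_real_derivative e' y) (at y)" "(e' has_real_derivative e'' y) (at y)"
    and "e y \<noteq> 0"
  shows "((\<lambda>x. u x / e x) has_real_derivative (u' y * e y - u y * e' y) / (e y)^2) (at y)"
    and "((\<lambda>x. (u' x * e x - u x * e' x) / (e x)^2) has_real_derivative
          (u'' y - e'' y * (u y / e y) - 2 * e' y * ((u' y * e y - u y * e' y) / (e y)^2)) / e y) (at y)"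
proof -
  show "((\<lambda>x. u x / e x) has_real_derivative (u' y * e y - u y * e' y) / (e y)^2) (at y)"
    using DERIV_divide[OF u(1) e(1) \<open>e y \<noteq> 0\<close>] by (simp add: power2_eq_square)
  have "((\<lambda>x. (u' x * e x - u x * e' x) / (e x)^2) has_real_derivative
      ((u'' y * e y + u' y * e' y - (u' y * e' y + u y * e'' y)) * (e y)^2
        - (u' y * e y - u y * e' y) * (2 * e y * e' y)) / ((e y)^2 * (e y)^2)) (at y)"
    using assms by (auto intro!: derivative_eq_intros)
  then show "((\<lambda>x. (u' x * e x - u x * e' x) / (e x)^2) has_real_derivative
          (u'' y - e'' y * (u y / e y) - 2 * e' y * ((u' y * e y - u y * e' y) / (e y)^2)) / e y) (at y)"
    by (rule DERIV_cong) (use \<open>e y \<noteq> 0\<close> in \<open>simp add: field_simps power2_eq_square\<close>)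
qed

lemma quotient_equation:
  fixes e e' e'' u u' u'' b ta dd :: real
  assumes "0 < e" "0 < u"
    and eq: "0 = 1/2 * b^2 * u'' + ta * u' + e * u - u^2 - dd * u'^2 / u"
    and w: "w = u / e" and w': "w' = (u' * e - u * e') / e^2"
    and w'': "w'' = (u'' - e'' * w - 2 * e' * w') / e"
  shows "b^2 / e / 2 * w'' = w * (w - (1 + (1/2 * b^2 * e'' + ta * e') / e^2 - dd * e'^2 / e^3))
      - (b^2 / e * (e' / e) + ta / e - 2 * (dd / e) * (e' / e)) * w' + dd / e * w'^2 / w"
proof -
  have u: "u = e * w" and u': "u' = e' * w + e * w'" and u'': "u'' = e * w'' + e'' * w + 2 * e' * w'"
    using \<open>0 < e\<close> by (simp_all add: w w' w'' field_simps power2_eq_square)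
  have "0 < w" using assms by simp
  have "0 = (1/2 * b^2 * (e * w'' + e'' * w + 2 * e' * w') + ta * (e' * w + e * w') + e * (e * w)
      - (e * w)^2 - dd * (e' * w + e * w')^2 / (e * w)) / e^2"
    using eq unfolding u u' u'' by simp
  also have "\<dots> = b^2 / e / 2 * w'' - (w * (w - (1 + (1/2 * b^2 * e'' + ta * e') / e^2 - dd * e'^2 / e^3))
      - (b^2 / e * (e' / e) + ta / e - 2 * (dd / e) * (e' / e)) * w' + dd / e * w'^2 / w)"
    using \<open>0 < e\<close> \<open>0 < w\<close> by (simp add: field_simps power2_eq_square power3_eq_cube)
  finally show ?thesis by simp
qed

lemma bounded_image_abs_le:
  fixes f :: "'a \<Rightarrow> real"
  shows "bounded (f ` S) \<Longrightarrow> \<exists>K. \<forall>x\<in>S. \<bar>f x\<bar> \<le> K"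
  unfolding bounded_iff by auto

lemma coefficient_bounds:
  fixes P Q A D Kb Ke Ka c :: real
  assumes "0 < P" "P \<le> Kb" "\<bar>Q\<bar> \<le> Ke" "\<bar>A\<bar> \<le> Ka" "0 \<le> D" "D \<le> c * P"
  shows "D \<le> c * Kb" and "\<bar>P * Q + A - 2 * D * Q\<bar> \<le> Kb * Ke + Ka + 2 * (c * Kb) * Ke"
proof -
  have "0 \<le> c * P" using assms by linarith
  then have "0 \<le> c" using \<open>0 < P\<close> by (simp add: zero_le_mult_iff)
  then show "D \<le> c * Kb" using assms by (meson mult_left_mono order_trans)
  have "\<bar>P * Q\<bar> \<le> Kb * Ke"
    unfolding abs_mult using assms by (intro mult_mono) auto
  moreover have "\<bar>2 * D * Q\<bar> \<le> 2 * (c * Kb) * Ke"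
    unfolding abs_mult using assms \<open>D \<le> c * Kb\<close> by (intro mult_mono) auto
  ultimately show "\<bar>P * Q + A - 2 * D * Q\<bar> \<le> Kb * Ke + Ka + 2 * (c * Kb) * Ke"
    using assms by linarith
qed

lemma solution_ratio_tendsto_one:
  fixes b ta dd e e' e'' u u' u'' :: "real \<Rightarrow> real" and y0 c C1 C2 :: real
  assumes e_pos: "\<forall>y\<ge>y0. 0 < e y" and e_C2: "C2_with {y0..} e e' e''"
    and b_nz: "\<forall>y\<ge>y0. b y \<noteq> 0" and dd: "\<forall>y\<ge>y0. 0 \<le> dd y \<and> dd y \<le> c * (b y)^2"
    and bdd: "bounded ((\<lambda>y. (b y)^2 / e y) ` {y0..})" "bounded ((\<lambda>y. ta y / e y) ` {y0..})"
      "bounded ((\<lambda>y. e' y / e y) ` {y0..})"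
    and Psi: "((\<lambda>y. Psi b ta dd e e' e'' y) \<longlongrightarrow> 1) at_top"
    and u_pos: "\<forall>y\<ge>y0. 0 < u y" and u_C2: "C2_with {y0..} u u' u''"
    and u_eq: "\<forall>y\<ge>y0. 0 = 1/2 * (b y)^2 * u'' y + ta y * u' y + e y * u y - (u y)^2
                 - dd y * (u' y)^2 / u y"
    and "0 < C1" and u_bounds: "\<forall>y\<ge>y0. C1 * e y \<le> u y \<and> u y \<le> C2 * e y"
  shows "((\<lambda>y. u y / e y) \<longlongrightarrow> 1) at_top"
proof -
  obtain Kb Ka Ke where Kb: "\<And>y. y0 \<le> y \<Longrightarrow> \<bar>(b y)^2 / e y\<bar> \<le> Kb"
    and Ka: "\<And>y. y0 \<le> y \<Longrightarrow> \<bar>ta y / e y\<bar> \<le> Ka"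
    and Ke: "\<And>y. y0 \<le> y \<Longrightarrow> \<bar>e' y / e y\<bar> \<le> Ke"
    using bdd[THEN bounded_image_abs_le] by (metis atLeast_iff)
  define w' where "w' y = (u' y * e y - u y * e' y) / (e y)^2" for y
  define w'' where "w'' y = (u'' y - e'' y * (u y / e y) - 2 * e' y * w' y) / e y" for y
  define B where "B y = (b y)^2 / e y * (e' y / e y) + ta y / e y - 2 * (dd y / e y) * (e' y / e y)" for y
  have "ratio_equation (\<lambda>y. u y / e y) w' w'' (\<lambda>y. (b y)^2 / e y) B (\<lambda>y. dd y / e y)
      (Psi b ta dd e e' e'') C1 C2 Kb (Kb * Ke + Ka + 2 * (c * Kb) * Ke) (c * Kb)"
  proof (unfold_locales; (rule eventually_mono[OF eventually_gt_at_top[of y0]])?)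
    fix y assume "y0 < y"
    then have "y0 \<le> y" by simp
    have ratio: "0 < (b y)^2 / e y" "dd y / e y \<le> c * ((b y)^2 / e y)"
      using b_nz e_pos dd \<open>y0 \<le> y\<close> by (auto simp: divide_right_mono)
    show "C1 \<le> u y / e y \<and> u y / e y \<le> C2"
      using u_bounds e_pos \<open>y0 \<le> y\<close> by (simp add: pos_le_divide_eq pos_divide_le_eq)
    have "e y \<noteq> 0" using e_pos \<open>y0 \<le> y\<close> by force
    show "((\<lambda>y. u y / e y) has_real_derivative w' y) (at y) \<and> (w' has_real_derivative w'' y) (at y)"
      using quotient_has_derivatives[where u=u and u'=u' and u''=u'' and e=e and e'=e' and e''=e''
          and y=y, OF C2_with_has_derivatives_at[OF u_C2 \<open>y0 < y\<close>]
          C2_with_has_derivatives_at[OF e_C2 \<open>y0 < y\<close>] \<open>e y \<noteq> 0\<close>]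
      unfolding w'_def[abs_def] w''_def by simp
    show "0 < (b y)^2 / e y \<and> (b y)^2 / e y \<le> Kb \<and> \<bar>B y\<bar> \<le> Kb * Ke + Ka + 2 * (c * Kb) * Ke
        \<and> 0 \<le> dd y / e y \<and> dd y / e y \<le> c * Kb"
    proof -
      have "(b y)^2 / e y \<le> Kb" using Kb[OF \<open>y0 \<le> y\<close>] by (rule abs_le_D1)
      moreover have "0 \<le> dd y / e y" using dd e_pos \<open>y0 \<le> y\<close> by force
      ultimately show ?thesis
        using coefficient_bounds[OF ratio(1) _ Ke[OF \<open>y0 \<le> y\<close>] Ka[OF \<open>y0 \<le> y\<close>] _ ratio(2)] ratio(1)
        unfolding B_def by blast
    qed
    show "(b y)^2 / e y / 2 * w'' y = u y / e y * (u y / e y - Psi b ta dd e e' e'' y) - B y * w' y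
        + dd y / e y * (w' y)^2 / (u y / e y)"
      unfolding Psi_def B_def
      by (rule quotient_equation[where u="u y" and u'="u' y" and u''="u'' y" and e'="e' y"
            and e''="e'' y"]) (use e_pos u_pos u_eq \<open>y0 \<le> y\<close> in \<open>auto simp: w'_def w''_def\<close>)
  qed (rule \<open>0 < C1\<close> Psi)+
  then show ?thesis by (rule ratio_equation.tendsto_one)
qed

lemma d_fun_bounds:
  assumes "0 < R" "\<bar>rho y\<bar> \<le> 1"
  shows "0 \<le> d_fun R b rho y \<and> d_fun R b rho y \<le> (R + 2) / 2 * (b y)^2"
proof -
  define q where "q = (1 - (rho y)^2) * R + (rho y)^2 + 1"
  have "(rho y)^2 \<le> 1" using assms(2) by (simp add: abs_le_square_iff[of _ 1, simplified])
  then have "0 \<le> (1 - (rho y)^2) * R" "(1 - (rho y)^2) * R \<le> R"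
    using assms(1) by (simp_all add: mult_left_le_one_le)
  then have "0 \<le> q" "q \<le> R + 2" using \<open>(rho y)^2 \<le> 1\<close> by (simp_all add: q_def)
  moreover have "d_fun R b rho y = (b y)^2 / 2 * q" by (simp add: d_fun_def q_def)
  moreover have "0 \<le> (b y)^2 / 2 * q" using \<open>0 \<le> q\<close> by simp
  moreover have "(b y)^2 / 2 * q \<le> (b y)^2 / 2 * (R + 2)" using \<open>q \<le> R + 2\<close> by (simp add: mult_left_mono)
  moreover have "(b y)^2 / 2 * (R + 2) = (R + 2) / 2 * (b y)^2" by simp
  ultimately show ?thesis by linarith
qed

theorem theorem4p10:
  fixes Em :: ereal
    and r lam sigma a b rho delta :: "real \<Rightarrow> real"
    and R y0 C1 C2 :: real
    and eta1 eta2 u u1 u2 :: "real \<Rightarrow> real"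
  assumes Em: "Em \<noteq> \<infinity>"
    and lip: "loc_lipschitz_on (dom_E Em) r" "loc_lipschitz_on (dom_E Em) lam"
      "loc_lipschitz_on (dom_E Em) sigma" "loc_lipschitz_on (dom_E Em) a"
      "loc_lipschitz_on (dom_E Em) b" "loc_lipschitz_on (dom_E Em) rho"
      "loc_lipschitz_on (dom_E Em) delta"
    and sigma_pos: "\<forall>y\<in>dom_E Em. sigma y > 0"
    and b_nz: "\<forall>y\<in>dom_E Em. b y \<noteq> 0"
    and rho_bd: "\<forall>y\<in>dom_E Em. -1 \<le> rho y \<and> rho y \<le> 1"
    and R: "R > 0" "R \<noteq> 1"
    and y0: "y0 \<in> dom_E Em"
    and A1_pos: "\<forall>y\<ge>y0. eta_fun R r lam delta y > 0"
    and A1_C2: "C2_with {y0..} (eta_fun R r lam delta) eta1 eta2"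
    and A2: "bounded ((\<lambda>y. (b y)\<^sup>2 / eta_fun R r lam delta y) ` {y0..})"
      "bounded ((\<lambda>y. atil_fun R a rho lam b y / eta_fun R r lam delta y) ` {y0..})"
      "bounded ((\<lambda>y. eta1 y / eta_fun R r lam delta y) ` {y0..})"
    and A3: "((\<lambda>y. Psi b (atil_fun R a rho lam b) (d_fun R b rho)
                  (eta_fun R r lam delta) eta1 eta2 y) \<longlongrightarrow> 1) at_top"
    and u_pos: "\<forall>y\<ge>y0. u y > 0"
    and u_C2: "C2_with {y0..} u u1 u2"
    and u_eq: "\<forall>y\<ge>y0. 0 = 1/2 * (b y)\<^sup>2 * u2 y + atil_fun R a rho lam b y * u1 y
                 + eta_fun R r lam delta y * u y - (u y)\<^sup>2
                 - d_fun R b rho y * (u1 y)\<^sup>2 / u y"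
    and C: "0 < C1" "C1 < C2"
    and u_bounds: "\<forall>y\<ge>y0. C1 * eta_fun R r lam delta y \<le> u y \<and> u y \<le> C2 * eta_fun R r lam delta y"
  shows "((\<lambda>y. u y / eta_fun R r lam delta y) \<longlongrightarrow> 1) at_top"
proof -
  have dom: "y \<in> dom_E Em" if "y0 \<le> y" for y
    using y0 that by (auto simp: dom_E_def intro: less_le_trans)
  have "\<forall>y\<ge>y0. 0 \<le> d_fun R b rho y \<and> d_fun R b rho y \<le> (R + 2) / 2 * (b y)^2"
    using d_fun_bounds R(1) rho_bd dom by (simp add: abs_le_iff)
  moreover have "\<forall>y\<ge>y0. b y \<noteq> 0" using b_nz dom by blast
  ultimately show ?thesis
    using solution_ratio_tendsto_one[OF A1_pos A1_C2 _ _ A2 A3 u_pos u_C2 u_eq C(1) u_bounds] by blast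
qed

end
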